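(* Let $\mathcal C\subset\mathbb R^2$ be a nonempty open bounded convex set with $0\in\mathcal C$, and let $P,Q$ be distinct points of $\mathbb R^2$ such that the closed segments $[P,Q]$ and $[-P,-Q]$ are contained in $\partial\mathcal C$. Let $\mathcal T$ be the open convex hull of $P,Q,-P,-Q$. Then for every $R>0$: (1) $\mathcal B_{\mathcal C}(0,R)\cap P0Q=\mathcal B_{\mathcal T}(0,R)\cap P0Q$; (2) $\mu_{\mathcal C}\big(\mathcal B_{\mathcal C}(0,R)\cap P0Q\big)\le 2\pi R^2$.
   Context: Let $\mathcal C\subset\mathbb R^m$ be a nonempty open bounded convex set. For distinct $p,q\in\mathcal C$, let $a,b$ be the intersection points of the straight line through $p,q$ with $\partial\mathcal C$, labelled so that $p=(1-s)a+sb$ and $q=(1-t)a+tb$ with $0<s<t<1$; the Hilbert metric is $d_{\mathcal C}(p,q)=\frac12\ln\!\big(\frac{1-s}{s}\cdot\frac{t}{1-t}\big)$, and $d_{\mathcal C}(p,p)=0$. The associated Finsler norm at $p\in\mathcal C$ is $F_{\mathcal C}(p,v)=\frac12\big(\frac1{t^-}+\frac1{t^+}\big)$ for $v\neq0$, where $t^\pm>0$ are the unique numbers with $p-t^-v\in\partial\mathcal C$ and $p+t^+v\in\partial\mathcal C$, and $F_{\mathcal C}(p,0)=0$. Let $B_{\mathcal C}(p)=\{v\in\mathbb R^m : F_{\mathcal C}(p,v)<1\}$, let $\mathrm{vol}$ be Lebesgue measure on $\mathbb R^m$ and $\omega_m$ the Lebesgue volume of the Euclidean unit ball (so $\omega_2=\pi$).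 The Hilbert measure is $\mu_{\mathcal C}(A)=\int_A\frac{\omega_m}{\mathrm{vol}(B_{\mathcal C}(p))}\,d\mathrm{vol}(p)$ for Borel $A\subset\mathcal C$. When $0\in\mathcal C$ and $R>0$, $\mathcal B_{\mathcal C}(0,R)=\{p\in\mathcal C : d_{\mathcal C}(0,p)<R\}$ denotes the open metric ball. The same notation applies to the open convex set $\mathcal T$. For three distinct points $a,b,c\in\mathbb R^2$, $abc$ denotes their open convex hull (open triangle); so $P0Q$ is the open triangle with vertices $P$, $0$, $Q$. *)

theory Defs
  imports "HOL-Analysis.Analysis"
begin

definition hilbert_dist :: "'a::euclidean_space set \<Rightarrow> 'a \<Rightarrow> 'a \<Rightarrow> real" where
  "hilbert_dist C p q =
     (if p = q then 0 else
       (THE d. \<exists>a b s t. a \<in> frontier C \<and> b \<in> frontier C \<and>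
          0 < s \<and> s < t \<and> t < 1 \<and>
          p = (1 - s) *\<^sub>R a + s *\<^sub>R b \<and> q = (1 - t) *\<^sub>R a + t *\<^sub>R b \<and>
          d = (1/2) * ln (((1 - s) / s) * (t / (1 - t)))))"

definition hilbert_finsler :: "'a::euclidean_space set \<Rightarrow> 'a \<Rightarrow> 'a \<Rightarrow> real" where
  "hilbert_finsler C p v =
     (if v = 0 then 0 else
       (1/2) * (1 / (THE t. 0 < t \<and> p - t *\<^sub>R v \<in> frontier C)
              + 1 / (THE t. 0 < t \<and> p + t *\<^sub>R v \<in> frontier C)))"

definition finsler_ball :: "'a::euclidean_space set \<Rightarrow> 'a \<Rightarrow> 'a set" where
  "finsler_ball C p = {v. hilbert_finsler C p v < 1}"

definition unit_ball_vol :: "'a::euclidean_space itself \<Rightarrow> real" where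
  "unit_ball_vol _ = measure lebesgue (ball (0::'a) 1)"

definition hilbert_measure :: "'a::euclidean_space set \<Rightarrow> 'a set \<Rightarrow> ennreal" where
  "hilbert_measure C A =
     (\<integral>\<^sup>+ p. indicator A p *
        ennreal (unit_ball_vol TYPE('a) / measure lebesgue (finsler_ball C p)) \<partial>lebesgue)"

definition hilbert_ball :: "'a::euclidean_space set \<Rightarrow> 'a \<Rightarrow> real \<Rightarrow> 'a set" where
  "hilbert_ball C x R = {p \<in> C. hilbert_dist C x p < R}"

definition open_triangle :: "'a::euclidean_space \<Rightarrow> 'a \<Rightarrow> 'a \<Rightarrow> 'a set" where
  "open_triangle a b c = interior (convex hull {a, b, c})"

end

theory Submission
  imports Defs
begin

text \<open>
  Everything is computed in the linear coordinates
  \<open>L(w) = ((w\<^sub>1 + w\<^sub>2)/2) P + ((w\<^sub>1 - w\<^sub>2)/2) Q\<close>, which map the square \<open>[-1,1]\<^sup>2\<close>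
  onto \<open>conv{\<plusminus>P,\<plusminus>Q}\<close> and the triangle \<open>P0Q\<close> into the sector \<open>|w\<^sub>2| < w\<^sub>1 < 1\<close>.

  (1) For \<open>p = L(w)\<close> in the sector, the chord of \<open>C\<close> through 0 and \<open>p\<close> has the endpoints
      \<open>\<plusminus>p/w\<^sub>1\<close> on the two edges, so \<open>d\<^sub>C(0,p) = artanh w\<^sub>1\<close>.  The parallelogram \<open>T\<close>
      satisfies the same hypotheses as \<open>C\<close>, hence \<open>d\<^sub>T(0,p) = artanh w\<^sub>1\<close> as well, and
      the two metric balls agree on \<open>P0Q\<close>.
  (2) \<open>L(w) \<plusminus> L(z) \<in> C\<close> whenever \<open>w \<plusminus> z\<close> lies in the open square, so the Finsler unit
      ball at \<open>L(w)\<close> contains the image of a box of area \<open>4(1-w\<^sub>1)(1-|w\<^sub>2|)\<close>.  On the ball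
      of radius \<open>R\<close> we have \<open>w\<^sub>1 < tanh R\<close>; integrating the resulting product bound for the
      density over \<open>[0, tanh R] \<times> [-tanh R, tanh R]\<close> gives
      \<open>(\<pi>/2) ln\<^sup>2(1 - tanh R) \<le> 2\<pi>R\<^sup>2\<close>.
\<close>

lemma frontier_notin_open: "open D \<Longrightarrow> x \<in> frontier D \<Longrightarrow> x \<notin> D"
  using frontier_disjoint_eq by blast

lemma ray_frontier_unique:
  fixes D :: "'a::euclidean_space set"
  assumes "open D" "convex D" "p \<in> D" "0 < t1" "0 < t2"
    and "p + t1 *\<^sub>R v \<in> frontier D" "p + t2 *\<^sub>R v \<in> frontier D"
  shows "t1 = t2"
proof -
  have no_earlier: False
    if "0 < a" "a < b" "p + a *\<^sub>R v \<in> frontier D" "p + b *\<^sub>R v \<in> frontier D" for a b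
  proof -
    have "v \<noteq> 0" using that(3) assms(1,3) frontier_notin_open by force
    then have "p + a *\<^sub>R v \<in> open_segment p (p + b *\<^sub>R v)"
      using that(1,2) unfolding open_segment_def closed_segment_def
      by (auto intro!: exI[of _ "a/b"] simp: algebra_simps)
    moreover have "open_segment p (p + b *\<^sub>R v) \<subseteq> D"
      using in_interior_closure_convex_segment[OF assms(2)] that(4) assms(1,3)
      by (metis Diff_iff frontier_def interior_open)
    ultimately show False using that(3) assms(1) frontier_notin_open by blast
  qed
  show ?thesis using no_earlier[of t1 t2] no_earlier[of t2 t1] assms(4-7) by fastforce
qed

lemma ray_frontier_exists:
  fixes D :: "'a::euclidean_space set"
  assumes "open D" "bounded D" "p \<in> D" "v \<noteq> 0"
  obtains t where "0 < t" "p + t *\<^sub>R v \<in> frontier D"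
proof -
  obtain B where B: "\<And>x. x \<in> D \<Longrightarrow> norm x \<le> B" using assms(2) bounded_iff by blast
  define M where "M = (\<bar>B\<bar> + norm p + 1) / norm v"
  have M: "M > 0" using assms(4) by (simp add: M_def add_nonneg_pos)
  define q where "q = p + M *\<^sub>R v"
  have "norm (M *\<^sub>R v) = \<bar>B\<bar> + norm p + 1" using assms(4) M by (simp add: M_def)
  moreover have "norm (M *\<^sub>R v) \<le> norm q + norm p"
    unfolding q_def by (metis add_diff_cancel_left' norm_triangle_ineq4)
  ultimately have "q \<notin> D" using B by force
  then obtain x where x: "x \<in> closed_segment p q" "x \<in> frontier D"
    using connected_Int_frontier[of "closed_segment p q" D] assms(3) by auto
  then obtain u where u: "0 \<le> u" "x = p + (u * M) *\<^sub>R v"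
    unfolding closed_segment_def q_def by (auto simp: algebra_simps)
  have "u \<noteq> 0" using x(2) u(2) assms(3) frontier_notin_open[OF assms(1)] by auto
  then show ?thesis using that[of "u * M"] u M x(2) by simp
qed

lemma ray_frontier_beyond:
  fixes D :: "'a::euclidean_space set"
  assumes "open D" "convex D" "p \<in> D" "0 < t" "p + t *\<^sub>R v \<in> frontier D"
    and "0 \<le> s" "p + s *\<^sub>R v \<in> D"
  shows "s < t"
proof (rule ccontr)
  assume "\<not> s < t"
  then have "p + t *\<^sub>R v \<in> closed_segment p (p + s *\<^sub>R v)"
    unfolding closed_segment_def using assms(4)
    by (auto intro!: exI[of _ "t/s"] simp: algebra_simps)
  moreover have "closed_segment p (p + s *\<^sub>R v) \<subseteq> D"
    using assms(2,3,7) closed_segment_subset by blast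
  ultimately show False using frontier_notin_open[OF assms(1,5)] by blast
qed

lemma exit_parameter_gt_1:
  fixes D :: "'a::euclidean_space set"
  assumes "open D" "bounded D" "convex D" "p \<in> D" "v \<noteq> 0" "p + v \<in> D"
  shows "(THE t. 0 < t \<and> p + t *\<^sub>R v \<in> frontier D) > 1"
proof -
  obtain t where t: "0 < t" "p + t *\<^sub>R v \<in> frontier D"
    using ray_frontier_exists assms(1,2,4,5) by blast
  have "(THE t. 0 < t \<and> p + t *\<^sub>R v \<in> frontier D) = t"
    using t ray_frontier_unique[OF assms(1,3,4)] by blast
  moreover have "1 < t" using ray_frontier_beyond[OF assms(1,3,4) t, of 1] assms(6) by simp
  ultimately show ?thesis by simp
qed

lemma hilbert_finsler_less_1:
  fixes D :: "'a::euclidean_space set"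
  assumes "open D" "bounded D" "convex D" "p \<in> D" "p + v \<in> D" "p - v \<in> D"
  shows "hilbert_finsler D p v < 1"
proof (cases "v = 0")
  case True then show ?thesis by (simp add: hilbert_finsler_def)
next
  case False
  define tp where "tp = (THE t. 0 < t \<and> p + t *\<^sub>R v \<in> frontier D)"
  define tm where "tm = (THE t. 0 < t \<and> p - t *\<^sub>R v \<in> frontier D)"
  have "tp > 1" unfolding tp_def using exit_parameter_gt_1[OF assms(1-4) False assms(5)] .
  moreover have "tm > 1"
    unfolding tm_def using exit_parameter_gt_1[OF assms(1-4), of "-v"] False assms(6) by simp
  ultimately have "1 / tm < 1" "1 / tp < 1" by simp_all
  then have "1 / tm + 1 / tp < 2" by linarith
  then show ?thesis using False by (simp add: hilbert_finsler_def tp_def tm_def)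
qed

lemma symmetric_chord_parameters:
  fixes D :: "'a::euclidean_space set"
  assumes "open D" "convex D" "0 \<in> D" "0 < c"
    and "c *\<^sub>R p \<in> frontier D" "(-c) *\<^sub>R p \<in> frontier D"
    and "a \<in> frontier D" "b \<in> frontier D" "0 < s" "s < t" "t < 1"
    and "0 = (1 - s) *\<^sub>R a + s *\<^sub>R b" "p = (1 - t) *\<^sub>R a + t *\<^sub>R b"
  shows "s = 1/2" "t = (1 + 1/c) / 2"
proof -
  have p: "p = (t - s) *\<^sub>R (b - a)"
    using assms(12,13) by (simp add: algebra_simps)
  have "b = (1 - s) *\<^sub>R (b - a) + ((1 - s) *\<^sub>R a + s *\<^sub>R b)"
    and "a = (-s) *\<^sub>R (b - a) + ((1 - s) *\<^sub>R a + s *\<^sub>R b)"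
    by (simp_all add: algebra_simps)
  then have "b = (1 - s) *\<^sub>R (b - a)" and "a = (-s) *\<^sub>R (b - a)"
    using assms(12) by simp_all
  then have b: "b = ((1 - s) / (t - s)) *\<^sub>R p" and a: "a = (s / (t - s)) *\<^sub>R (-p)"
    using assms(10) unfolding p by simp_all
  have "(1 - s) / (t - s) = c"
    using ray_frontier_unique[OF assms(1-3), of _ _ p] assms(4,5,8,10,11) b by simp
  moreover have "s / (t - s) = c"
    using ray_frontier_unique[OF assms(1-3), of _ _ "-p"] assms(4,6,7,9,10) a by simp
  ultimately have "1 - s = c * (t - s)" "s = c * (t - s)"
    using assms(10) by (simp_all add: field_simps)
  then show s: "s = 1/2" by linarith
  with \<open>s = c * (t - s)\<close> show "t = (1 + 1/c) / 2"
    using assms(4) by (simp add: field_simps)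
qed

lemma hilbert_dist_symmetric_chord:
  fixes D :: "'a::euclidean_space set"
  assumes "open D" "convex D" "0 \<in> D" "1 < c" "p \<noteq> 0"
    and "c *\<^sub>R p \<in> frontier D" "(-c) *\<^sub>R p \<in> frontier D"
  shows "hilbert_dist D 0 p = artanh (1/c)"
proof -
  define t where "t = (1 + 1/c) / 2"
  have t: "1/2 < t" "t < 1" using assms(4) by (auto simp: t_def field_simps)
  have "((1 - 1/2) / (1/2)) * (t / (1 - t)) = (1 + 1/c) / (1 - 1/c)"
    using assms(4) by (simp add: t_def field_simps)
  then have chord_value: "(1/2) * ln (((1 - 1/2) / (1/2)) * (t / (1 - t))) = artanh (1/c)"
    by (simp add: artanh_def)
  have "(1 - t) *\<^sub>R ((-c) *\<^sub>R p) + t *\<^sub>R (c *\<^sub>R p) = ((1 - t) * (-c) + t * c) *\<^sub>R p"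
    by (simp only: scaleR_scaleR scaleR_add_left)
  also have "(1 - t) * (-c) + t * c = 1" using assms(4) by (simp add: t_def field_simps)
  finally have witness: "p = (1 - t) *\<^sub>R ((-c) *\<^sub>R p) + t *\<^sub>R (c *\<^sub>R p)" by simp
  show ?thesis
    unfolding hilbert_dist_def if_not_P[OF assms(5)[symmetric]]
  proof (rule the_equality)
    show "\<exists>a b s t. a \<in> frontier D \<and> b \<in> frontier D \<and> 0 < s \<and> s < t \<and> t < 1 \<and>
        0 = (1 - s) *\<^sub>R a + s *\<^sub>R b \<and> p = (1 - t) *\<^sub>R a + t *\<^sub>R b \<and>
        artanh (1/c) = (1/2) * ln (((1 - s) / s) * (t / (1 - t)))"
      using assms(6,7) t witness chord_value
      by (intro exI[of _ "(-c) *\<^sub>R p"] exI[of _ "c *\<^sub>R p"] exI[of _ "1/2"] exI[of _ t]) auto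
  next
    fix d assume "\<exists>a b s t. a \<in> frontier D \<and> b \<in> frontier D \<and> 0 < s \<and> s < t \<and> t < 1 \<and>
        0 = (1 - s) *\<^sub>R a + s *\<^sub>R b \<and> p = (1 - t) *\<^sub>R a + t *\<^sub>R b \<and>
        d = (1/2) * ln (((1 - s) / s) * (t / (1 - t)))"
    then obtain a b s t' where h: "a \<in> frontier D" "b \<in> frontier D" "0 < s" "s < t'" "t' < 1"
        "0 = (1 - s) *\<^sub>R a + s *\<^sub>R b" "p = (1 - t') *\<^sub>R a + t' *\<^sub>R b"
        "d = (1/2) * ln (((1 - s) / s) * (t' / (1 - t')))" by blast
    have "s = 1/2" "t' = t"
      using symmetric_chord_parameters[OF assms(1-3) _ assms(6,7) h(1-7)] assms(4)
      by (auto simp: t_def)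
    then show "d = artanh (1/c)" using h(8) chord_value by (simp only:)
  qed
qed

lemma unit_disc_area: "Defs.unit_ball_vol TYPE(real^2) = pi"
proof -
  have "Defs.unit_ball_vol TYPE(real^2) = measure lborel (ball (0::real^2) 1)"
    unfolding Defs.unit_ball_vol_def by (rule measure_completion) simp
  also have "\<dots> = Ball_Volume.unit_ball_vol 2"
    using content_ball[where c="0::real^2" and r=1] by simp
  also have "\<dots> = pi" using unit_ball_vol_even[of 1] by simp
  finally show ?thesis .
qed

lemma measure_centered_box:
  fixes a b :: real
  assumes "0 < a" "0 < b"
  shows "measure lebesgue (box (- vector [a, b]) (vector [a, b] :: real^2)) = 4 * a * b"
proof -
  have "measure lebesgue (box (- vector [a, b]) (vector [a, b] :: real^2))
      = measure lborel (box (- vector [a, b]) (vector [a, b] :: real^2))"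
    by (rule measure_completion) simp
  also have "\<dots> = 4 * a * b"
    using assms by (simp add: measure_lborel_box_eq Basis_vec_def UNIV_2 axis_eq_axis inner_axis)
  finally show ?thesis .
qed

lemma artanh_less_imp_less_tanh:
  fixes x R :: real
  assumes "-1 < x" "x < 1" "artanh x < R"
  shows "x < tanh R"
proof (rule ccontr)
  assume "\<not> x < tanh R"
  then have le: "tanh R \<le> x" by simp
  have "(1 + tanh R) * (1 - x) \<le> (1 + x) * (1 - tanh R)" using le by (simp add: algebra_simps)
  then have "(1 + tanh R) / (1 - tanh R) \<le> (1 + x) / (1 - x)"
    using assms(2) tanh_real_bounds[of R] by (simp add: divide_simps)
  moreover have "0 < (1 + tanh R) / (1 - tanh R)" using tanh_real_bounds[of R] by simp
  ultimately have "artanh (tanh R) \<le> artanh x" by (simp add: artanh_def)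
  then show False using assms(3) by (simp add: artanh_tanh_real)
qed

text \<open>\<open>0 \<le> -ln(1 - tanh R) \<le> 2R\<close>, since \<open>1 - tanh R = 2e/(1+e)\<close> with \<open>e = exp(-2R) \<in> (0,1]\<close>.\<close>
lemma neg_ln_one_minus_tanh:
  fixes R :: real
  assumes "0 \<le> R"
  shows "0 \<le> - ln (1 - tanh R)" "- ln (1 - tanh R) \<le> 2 * R"
proof -
  define e where "e = exp (- 2 * R)"
  have e: "0 < e" "e \<le> 1" using assms by (simp_all add: e_def)
  have "tanh R = (1 - e) / (1 + e)" by (simp add: tanh_real_altdef e_def)
  then have tanh: "1 - tanh R = 2 * e / (1 + e)" using e(1) by (simp add: field_simps)
  have "e \<le> 1 - tanh R" "1 - tanh R \<le> 1" using e by (simp_all add: tanh field_simps)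
  moreover have "0 < 1 - tanh R" using tanh_real_lt_1[of R] by simp
  ultimately have "ln e \<le> ln (1 - tanh R)" "ln (1 - tanh R) \<le> 0" using e by simp_all
  then show "0 \<le> - ln (1 - tanh R)" "- ln (1 - tanh R) \<le> 2 * R" by (simp_all add: e_def)
qed

text \<open>The weights dominating the Hilbert density in \<open>w\<close>-coordinates: \<open>1/(1-t)\<close> on \<open>[0,r]\<close>,
  and its product with the symmetrised weight in the second coordinate.\<close>
definition half_weight :: "real \<Rightarrow> real \<Rightarrow> real" where
  "half_weight r t = (if 0 \<le> t \<and> t \<le> r then 1 / (1 - t) else 0)"

definition sector_weight :: "real \<Rightarrow> real^2 \<Rightarrow> real" where
  "sector_weight r w = half_weight r (w$1) * (half_weight r (w$2) + half_weight r (- w$2))"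

lemma half_weight_nonneg: "r < 1 \<Longrightarrow> 0 \<le> half_weight r t"
  by (simp add: half_weight_def)

lemma half_weight_measurable [measurable]: "half_weight r \<in> borel_measurable borel"
  unfolding half_weight_def by measurable

lemma nn_integral_half_weight:
  assumes "0 \<le> r" "r < 1"
  shows "(\<integral>\<^sup>+t. ennreal (half_weight r t) \<partial>lborel) = ennreal (- ln (1 - r))"
proof -
  have "(\<integral>\<^sup>+t. ennreal (half_weight r t) \<partial>lborel)
      = (\<integral>\<^sup>+t. ennreal (1 / (1 - t)) * indicator {0..r} t \<partial>lborel)"
    by (intro nn_integral_cong) (auto simp: half_weight_def indicator_def)
  also have "\<dots> = ennreal ((\<lambda>t. - ln (1 - t)) r - (\<lambda>t. - ln (1 - t)) 0)"
  proof (rule nn_integral_FTC_Icc)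
    fix x assume "x \<in> {0..r}"
    then have "0 < 1 - x" using assms by auto
    then show "((\<lambda>t. - ln (1 - t)) has_real_derivative 1 / (1 - x)) (at x)"
      by (auto intro!: derivative_eq_intros simp: field_simps)
    show "0 \<le> 1 / (1 - x)" using \<open>0 < 1 - x\<close> by simp
  qed (use assms in auto)
  finally show ?thesis by simp
qed

text \<open>By Tonelli on \<open>\<real>\<^sup>2\<close> and reflection invariance of Lebesgue measure, the sector weight
  has integral \<open>(-ln(1-r)) \<cdot> 2(-ln(1-r))\<close>.\<close>
lemma sector_weight_has_integral:
  assumes "0 \<le> r" "r < 1"
  shows "(sector_weight r has_integral 2 * (ln (1 - r))\<^sup>2) UNIV"
proof (rule nn_integral_has_integral)
  show "sector_weight r \<in> borel_measurable borel" unfolding sector_weight_def by measurable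
  show "0 \<le> sector_weight r w" for w
    using assms by (simp add: sector_weight_def half_weight_nonneg)
  define h where "h = - ln (1 - r)"
  have h: "0 \<le> h" using assms by (simp add: h_def)
  have reflect: "(\<integral>\<^sup>+t. ennreal (half_weight r (- t)) \<partial>lborel) = ennreal h"
    using nn_integral_real_affine[of "\<lambda>t. ennreal (half_weight r t)" "-1" 0]
      nn_integral_half_weight[OF assms] by (simp add: h_def)
  have symmetric: "(\<integral>\<^sup>+t. ennreal (half_weight r t + half_weight r (- t)) \<partial>lborel) = ennreal (2 * h)"
    using nn_integral_add[of "\<lambda>t. ennreal (half_weight r t)" lborel "\<lambda>t. ennreal (half_weight r (- t))"]
      reflect nn_integral_half_weight[OF assms] h assms
    by (simp add: half_weight_nonneg h_def ennreal_plus[symmetric] del: ennreal_plus)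
  define f where "f b t = ennreal (if b = axis 1 1 then half_weight r t else half_weight r t + half_weight r (- t))"
    for b :: "real^2" and t
  have "(\<integral>\<^sup>+w. ennreal (sector_weight r w) \<partial>lborel) = (\<integral>\<^sup>+x. (\<Prod>b\<in>Basis. f b (x \<bullet> b)) \<partial>lborel)"
    using assms by (intro nn_integral_cong)
      (simp add: Basis_vec_def UNIV_2 axis_eq_axis f_def sector_weight_def inner_axis ennreal_mult half_weight_nonneg mult.commute)
  also have "\<dots> = (\<Prod>b\<in>Basis. (\<integral>\<^sup>+x. f b x \<partial>lborel))"
    by (rule nn_integral_lborel_prod) (auto simp: f_def)
  also have "\<dots> = ennreal h * ennreal (2 * h)"
    using nn_integral_half_weight[OF assms] symmetric
    by (simp add: Basis_vec_def UNIV_2 axis_eq_axis f_def h_def mult.commute)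
  also have "\<dots> = ennreal (2 * (ln (1 - r))\<^sup>2)"
    using h by (simp add: ennreal_mult[symmetric] h_def power2_eq_square)
  finally show "(\<integral>\<^sup>+w. ennreal (sector_weight r w) \<partial>lborel) = ennreal (2 * (ln (1 - r))\<^sup>2)" .
qed simp

lemma sector_weight_lower_bound:
  assumes "\<bar>w$2\<bar> \<le> w$1" "w$1 \<le> r" "r < 1"
  shows "1 / ((1 - w$1) * (1 - \<bar>w$2\<bar>)) \<le> sector_weight r w"
proof -
  have second: "1 / (1 - \<bar>w$2\<bar>) \<le> half_weight r (w$2) + half_weight r (- w$2)"
    using assms by (cases "w$2 \<ge> 0") (auto simp: half_weight_def half_weight_nonneg)
  have first: "half_weight r (w$1) = 1 / (1 - w$1)" "0 \<le> 1 / (1 - w$1)"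
    using assms by (simp_all add: half_weight_def)
  have "1 / ((1 - w$1) * (1 - \<bar>w$2\<bar>)) = 1 / (1 - w$1) * (1 / (1 - \<bar>w$2\<bar>))" by simp
  also have "\<dots> \<le> 1 / (1 - w$1) * (half_weight r (w$2) + half_weight r (- w$2))"
    using second first(2) by (rule mult_left_mono)
  also have "\<dots> = sector_weight r w" unfolding sector_weight_def first(1) ..
  finally show ?thesis .
qed

text \<open>Linear change of variables for real-valued functions (the library states it for vector values).\<close>
lemma has_absolute_integral_change_of_variables_linear_real:
  fixes f :: "real^'n::{finite,wellorder} \<Rightarrow> real"
    and g :: "real^'n::{finite,wellorder} \<Rightarrow> real^'n::{finite,wellorder}"
  assumes "linear g"
  shows "(\<lambda>x. \<bar>det (matrix g)\<bar> * f (g x)) absolutely_integrable_on S \<and>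
           integral S (\<lambda>x. \<bar>det (matrix g)\<bar> * f (g x)) = b
     \<longleftrightarrow> f absolutely_integrable_on (g ` S) \<and> integral (g ` S) f = b"
  using has_absolute_integral_change_of_variables_linear[OF assms, where f="\<lambda>x. vec (f x) :: real^1" and S=S and b="vec b"]
  by (simp add: absolutely_integrable_on_1_iff integral_on_1_eq vec_eq_iff)

lemma nn_integral_linear_change:
  fixes g :: "real^'n::{finite,wellorder} \<Rightarrow> real^'n::{finite,wellorder}"
    and f :: "real^'n::{finite,wellorder} \<Rightarrow> real"
  assumes "linear g" "surj g" "\<And>x. 0 \<le> f x" "((\<lambda>x. f (g x)) has_integral V) UNIV"
  shows "(\<integral>\<^sup>+x. ennreal (f x) \<partial>lebesgue) = ennreal (\<bar>det (matrix g)\<bar> * V)"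
proof -
  let ?d = "\<bar>det (matrix g)\<bar>"
  have scaled: "((\<lambda>x. ?d * f (g x)) has_integral ?d * V) UNIV"
    using has_integral_mult_right[OF assms(4)] .
  then have "(\<lambda>x. ?d * f (g x)) absolutely_integrable_on UNIV"
    using assms(3) by (intro nonnegative_absolutely_integrable_1) (auto simp: has_integral_integrable)
  then have "f absolutely_integrable_on (g ` UNIV) \<and> integral (g ` UNIV) f = ?d * V"
    using has_absolute_integral_change_of_variables_linear_real[OF assms(1), where f=f and S=UNIV]
      integral_unique[OF scaled] by blast
  then have "f absolutely_integrable_on UNIV \<and> integral UNIV f = ?d * V"
    using assms(2) by simp
  then have "(f has_integral ?d * V) UNIV"
    using set_lebesgue_integral_eq_integral(1) has_integral_integral by metis
  then have "(\<integral>\<^sup>+x. ennreal (indicator UNIV x * f x) \<partial>lborel) = ennreal (?d * V)"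
    using assms(3) by (intro nn_integral_has_integral_lebesgue) auto
  then show ?thesis by (simp add: nn_integral_completion)
qed

text \<open>The coordinates \<open>L(w) = ((w\<^sub>1 + w\<^sub>2)/2) P + ((w\<^sub>1 - w\<^sub>2)/2) Q\<close>: the corners
  \<open>(1,1), (1,-1), (-1,-1), (-1,1)\<close> of the square go to \<open>P, Q, -P, -Q\<close>.\<close>
definition pq_coords :: "real^2 \<Rightarrow> real^2 \<Rightarrow> real^2 \<Rightarrow> real^2" where
  "pq_coords P Q w = ((w$1 + w$2) / 2) *\<^sub>R P + ((w$1 - w$2) / 2) *\<^sub>R Q"

lemma linear_pq_coords: "linear (pq_coords P Q)"
  unfolding pq_coords_def
  by (rule linearI) (simp_all add: algebra_simps add_divide_distrib diff_divide_distrib)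

lemma pq_coords_vector: "pq_coords P Q (vector [a, b]) = ((a + b) / 2) *\<^sub>R P + ((a - b) / 2) *\<^sub>R Q"
  by (simp add: pq_coords_def)

lemma convex_contains_diamond:
  fixes K :: "'a::real_vector set"
  assumes "convex K" "P \<in> K" "-P \<in> K" "Q \<in> K" "-Q \<in> K" "\<bar>a\<bar> + \<bar>b\<bar> \<le> 1"
  shows "a *\<^sub>R P + b *\<^sub>R Q \<in> K"
proof -
  define x where "x = (if a \<ge> 0 then P else -P)"
  define y where "y = (if b \<ge> 0 then Q else -Q)"
  have xy: "x \<in> K" "y \<in> K" "a *\<^sub>R P = \<bar>a\<bar> *\<^sub>R x" "b *\<^sub>R Q = \<bar>b\<bar> *\<^sub>R y"
    using assms(2-5) by (auto simp: x_def y_def)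
  have zero: "0 \<in> K" using convexD[OF assms(1,2,3), of "1/2" "1/2"] by simp
  show ?thesis
  proof (cases "\<bar>a\<bar> + \<bar>b\<bar> = 0")
    case True then have "a = 0" "b = 0" by auto
    then show ?thesis using zero by simp
  next
    case False
    define m where "m = \<bar>a\<bar> + \<bar>b\<bar>"
    have m: "0 < m" "m \<le> 1" using False assms(6) by (auto simp: m_def)
    have "(\<bar>a\<bar> / m) *\<^sub>R x + (\<bar>b\<bar> / m) *\<^sub>R y \<in> K"
      using convexD[OF assms(1) xy(1,2)] m by (simp add: m_def add_divide_distrib[symmetric])
    then have "m *\<^sub>R ((\<bar>a\<bar> / m) *\<^sub>R x + (\<bar>b\<bar> / m) *\<^sub>R y) + (1 - m) *\<^sub>R 0 \<in> K"
      using convexD[OF assms(1) _ zero, of _ m "1 - m"] m by simp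
    then show ?thesis using m xy(3,4) by (simp add: scaleR_add_right)
  qed
qed

lemma pq_coords_square: "pq_coords P Q ` cbox (-1) 1 = convex hull {P, Q, -P, -Q}"
proof
  show "convex hull {P, Q, -P, -Q} \<subseteq> pq_coords P Q ` cbox (-1) 1"
  proof (rule hull_minimal)
    have "P = pq_coords P Q (vector [1, 1])" "Q = pq_coords P Q (vector [1, -1])"
      "-P = pq_coords P Q (vector [-1, -1])" "-Q = pq_coords P Q (vector [-1, 1])"
      by (simp_all add: pq_coords_vector)
    moreover have "vector [a, b] \<in> cbox (-1) (1::real^2)" if "\<bar>a\<bar> = 1" "\<bar>b\<bar> = 1" for a b
      using that by (auto simp: mem_box_cart forall_2)
    ultimately show "{P, Q, -P, -Q} \<subseteq> pq_coords P Q ` cbox (-1) 1" by auto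
  qed (intro convex_linear_image linear_pq_coords convex_box)
  show "pq_coords P Q ` cbox (-1) 1 \<subseteq> convex hull {P, Q, -P, -Q}"
  proof clarify
    fix z :: "real^2" assume "z \<in> cbox (-1) 1"
    then have "\<bar>z$1\<bar> \<le> 1" "\<bar>z$2\<bar> \<le> 1" by (auto simp: mem_box_cart forall_2 abs_le_iff)
    then have "\<bar>(z$1 + z$2) / 2\<bar> + \<bar>(z$1 - z$2) / 2\<bar> \<le> 1"
      by (cases "z$1 + z$2 \<ge> 0"; cases "z$1 - z$2 \<ge> 0") (auto simp: abs_if field_simps)
    then show "pq_coords P Q z \<in> convex hull {P, Q, -P, -Q}"
      unfolding pq_coords_def
      by (intro convex_contains_diamond) (auto intro: hull_inc)
  qed
qed

lemma pq_coords_open_square: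
  assumes "inj (pq_coords P Q)"
  shows "interior (convex hull {P, Q, -P, -Q}) = pq_coords P Q ` box (-1) 1"
  using interior_injective_linear_image[OF linear_pq_coords assms, of "cbox (-1) 1"]
  by (simp add: pq_coords_square)

lemma pq_coords_square_frontier:
  assumes "inj (pq_coords P Q)"
  shows "pq_coords P Q ` (cbox (-1) 1 - box (-1) 1) \<subseteq> frontier (interior (convex hull {P, Q, -P, -Q}))"
proof -
  have "box (-1) (1::real^2) \<noteq> {}" by (auto simp: box_ne_empty Basis_vec_def inner_axis)
  then have "closure (pq_coords P Q ` box (-1) 1) = pq_coords P Q ` cbox (-1) 1"
    using closure_injective_linear_image[OF linear_pq_coords assms, of "box (-1) 1"]
    by (simp add: closure_box)
  moreover have "frontier (interior (convex hull {P, Q, -P, -Q}))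
      = closure (interior (convex hull {P, Q, -P, -Q})) - interior (convex hull {P, Q, -P, -Q})"
    by (simp add: frontier_def)
  ultimately show ?thesis
    unfolding pq_coords_open_square[OF assms] using inj_image_mem_iff[OF assms] by (auto dest: injD[OF assms])
qed

lemma pq_coords_edges:
  assumes "\<bar>c\<bar> \<le> 1"
  shows "pq_coords P Q (vector [1, c]) \<in> closed_segment P Q"
    and "pq_coords P Q (vector [-1, -c]) \<in> closed_segment (-P) (-Q)"
proof -
  have edge: "pq_coords P Q (vector [1, c]) = (1 - (1 - c) / 2) *\<^sub>R P + ((1 - c) / 2) *\<^sub>R Q"
    by (simp add: pq_coords_vector field_simps)
  have "vector [-1, -c] = - (vector [1, c] :: real^2)" by (simp add: vec_eq_iff forall_2)
  then have "pq_coords P Q (vector [-1, -c]) = (1 - (1 - c) / 2) *\<^sub>R (-P) + ((1 - c) / 2) *\<^sub>R (-Q)"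
    using linear_neg[OF linear_pq_coords] edge by (simp add: algebra_simps)
  note edge this
  then show "pq_coords P Q (vector [1, c]) \<in> closed_segment P Q"
    and "pq_coords P Q (vector [-1, -c]) \<in> closed_segment (-P) (-Q)"
    unfolding closed_segment_def using assms by (auto intro!: exI[of _ "(1 - c) / 2"])
qed

lemma edges_in_pq_coords:
  "closed_segment P Q \<union> closed_segment (-P) (-Q) \<subseteq> pq_coords P Q ` (cbox (-1) 1 - box (-1) 1)"
proof -
  have "x \<in> pq_coords P Q ` (cbox (-1) 1 - box (-1) 1)"
    if "x = (1 - u) *\<^sub>R (s *\<^sub>R P) + u *\<^sub>R (s *\<^sub>R Q)" "0 \<le> u" "u \<le> 1" "\<bar>s\<bar> = 1" for x u s
  proof
    have "(s + s * (1 - 2 * u)) / 2 = (1 - u) * s" "(s - s * (1 - 2 * u)) / 2 = u * s"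
      by (simp_all add: field_simps)
    then show "x = pq_coords P Q (vector [s, s * (1 - 2 * u)])"
      using that(1) by (simp only: pq_coords_vector scaleR_scaleR)
    show "vector [s, s * (1 - 2 * u)] \<in> cbox (-1) 1 - box (-1) (1::real^2)"
      using that(2-4) by (cases "s = 1") (auto simp: mem_box_cart forall_2 abs_if split: if_splits)
  qed
  from this[of _ _ 1] this[of _ _ "-1"] show ?thesis
    by (auto simp: closed_segment_def)
qed

text \<open>The open triangle \<open>P0Q\<close> is the image of a subset of the sector \<open>|w\<^sub>2| < w\<^sub>1 < 1\<close>:
  the closed triangle lies in an intersection of three half-planes, whose interior is the sector.\<close>
lemma open_triangle_in_sector:
  assumes "inj (pq_coords P Q)"
  shows "open_triangle P 0 Q \<subseteq> pq_coords P Q ` {w. \<bar>w$2\<bar> < w$1 \<and> w$1 < 1}"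
proof -
  define S :: "(real^2) set" where
    "S = {w. vector [1, 0] \<bullet> w \<le> 1} \<inter> {w. vector [-1, 1] \<bullet> w \<le> 0} \<inter> {w. vector [-1, -1] \<bullet> w \<le> 0}"
  have inner: "vector [a, b] \<bullet> w = a * w$1 + b * w$2" for a b and w :: "real^2"
    by (simp add: inner_vec_def UNIV_2)
  have nz: "vector [a, b] \<noteq> (0::real^2)" if "a \<noteq> 0" for a b
    using that by (auto simp: vec_eq_iff forall_2)
  have "convex hull {vector [1, 1], 0, vector [1, -1]} \<subseteq> S"
  proof (rule hull_minimal)
    show "convex S" unfolding S_def by (intro convex_Int convex_halfspace_le)
  qed (auto simp: S_def inner)
  then have "interior (convex hull {vector [1, 1], 0, vector [1, -1]}) \<subseteq> interior S"
    by (rule interior_mono)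
  also have "interior S = {w. vector [1, 0] \<bullet> w < 1} \<inter> {w. vector [-1, 1] \<bullet> w < 0}
      \<inter> {w. vector [-1, -1] \<bullet> w < (0::real)}"
    by (simp add: S_def interior_Int nz)
  also have "\<dots> = {w. \<bar>w$2\<bar> < w$1 \<and> w$1 < 1}"
    by (auto simp: inner)
  finally have "pq_coords P Q ` interior (convex hull {vector [1, 1], 0, vector [1, -1]})
      \<subseteq> pq_coords P Q ` {w. \<bar>w$2\<bar> < w$1 \<and> w$1 < 1}" by (rule image_mono)
  moreover have "pq_coords P Q ` {vector [1, 1], 0, vector [1, -1]} = {P, 0, Q}"
    by (simp add: pq_coords_vector linear_0[OF linear_pq_coords])
  then have "convex hull {P, 0, Q} = pq_coords P Q ` (convex hull {vector [1, 1], 0, vector [1, -1]})"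
    by (simp add: convex_hull_linear_image[OF linear_pq_coords])
  ultimately show ?thesis
    unfolding open_triangle_def by (simp add: interior_injective_linear_image[OF linear_pq_coords assms])
qed

text \<open>The triangle \<open>P0Q\<close> lies in \<open>T\<close>, since 0 is the midpoint of \<open>P\<close> and \<open>-P\<close>.\<close>
lemma open_triangle_subset_parallelogram:
  "open_triangle P 0 Q \<subseteq> interior (convex hull {P, Q, -P, -Q})"
proof -
  have "0 \<in> convex hull {P, Q, -P, -Q}"
    using convexD[OF convex_convex_hull, of P "{P, Q, -P, -Q}" "-P" "1/2" "1/2"]
    by (simp add: hull_inc)
  then have "convex hull {P, 0, Q} \<subseteq> convex hull {P, Q, -P, -Q}"
    by (intro hull_minimal) (auto intro: hull_inc)
  then show ?thesis unfolding open_triangle_def by (rule interior_mono)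
qed

locale antipodal_edges =
  fixes C :: "(real^2) set" and P Q :: "real^2"
  assumes open_C: "open C" and bounded_C: "bounded C" and convex_C: "convex C"
    and zero_in_C: "0 \<in> C" and P_neq_Q: "P \<noteq> Q"
    and edge: "closed_segment P Q \<subseteq> frontier C"
    and opposite_edge: "closed_segment (-P) (-Q) \<subseteq> frontier C"
begin

abbreviation L :: "real^2 \<Rightarrow> real^2" where "L \<equiv> pq_coords P Q"

abbreviation parallelogram :: "(real^2) set" where
  "parallelogram \<equiv> interior (convex hull {P, Q, -P, -Q})"

lemma corners_frontier: "P \<in> frontier C" "Q \<in> frontier C" "-P \<in> frontier C" "-Q \<in> frontier C"
  using edge opposite_edge by auto

lemma not_in_frontier: "x \<in> C \<Longrightarrow> x \<notin> frontier C"
  using frontier_notin_open[OF open_C] by blast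

text \<open>\<open>P\<close> and \<open>Q\<close> are linearly independent: if \<open>Q = lP\<close>, uniqueness of the exit point along
  the ray through \<open>P\<close> (or \<open>-P\<close>) forces \<open>Q = P\<close> or \<open>Q = -P\<close>; the latter puts 0 on the edge.\<close>
lemma P_Q_independent:
  assumes "a *\<^sub>R P + b *\<^sub>R Q = 0"
  shows "a = 0 \<and> b = 0"
proof -
  have "P \<noteq> 0" using corners_frontier(1) zero_in_C not_in_frontier by auto
  have "b = 0"
  proof (rule ccontr)
    assume "b \<noteq> 0"
    define l where "l = - a / b"
    have "b *\<^sub>R Q = (-a) *\<^sub>R P" using assms by (simp add: eq_neg_iff_add_eq_0 add.commute)
    then have "(1 / b) *\<^sub>R (b *\<^sub>R Q) = (1 / b) *\<^sub>R ((-a) *\<^sub>R P)" by simp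
    then have Q: "Q = l *\<^sub>R P" using \<open>b \<noteq> 0\<close> by (simp add: l_def)
    consider "l > 0" | "l = 0" | "l < 0" by linarith
    then show False
    proof cases
      case 1
      then have "1 = l"
        using ray_frontier_unique[OF open_C convex_C zero_in_C, of 1 l P] corners_frontier(1,2) Q
        by simp
      then show False using Q P_neq_Q by simp
    next
      case 2
      then show False using Q corners_frontier(2) zero_in_C not_in_frontier by simp
    next
      case 3
      then have "1 = -l"
        using ray_frontier_unique[OF open_C convex_C zero_in_C, of 1 "-l" P] corners_frontier(1,4) Q
        by simp
      then have "midpoint P Q = 0" using Q by (simp add: midpoint_def)
      then show False using midpoint_in_closed_segment[of P Q] edge zero_in_C not_in_frontier by auto
    qed
  qed
  then show ?thesis using assms \<open>P \<noteq> 0\<close> by simp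
qed

lemma inj_L: "inj L"
  unfolding linear_injective_0[OF linear_pq_coords]
proof (intro allI impI)
  fix w :: "real^2" assume "L w = 0"
  then have "(w$1 + w$2) / 2 = 0 \<and> (w$1 - w$2) / 2 = 0"
    unfolding pq_coords_def by (rule P_Q_independent)
  then show "w = 0" by (simp add: vec_eq_iff forall_2)
qed

text \<open>\<open>T \<subseteq> C\<close>, because the corners lie in \<open>closure C\<close> and \<open>C\<close> is the interior of its closure.\<close>
lemma parallelogram_subset: "parallelogram \<subseteq> C"
proof -
  have "convex hull {P, Q, -P, -Q} \<subseteq> closure C"
    using corners_frontier by (intro hull_minimal convex_closure convex_C) (auto simp: frontier_def)
  then have "parallelogram \<subseteq> interior (closure C)" by (rule interior_mono)
  then show ?thesis by (simp add: convex_interior_closure[OF convex_C] interior_open[OF open_C])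
qed

lemma open_square_in_C: "w \<in> box (-1) 1 \<Longrightarrow> L w \<in> C"
  using pq_coords_open_square[OF inj_L] parallelogram_subset by blast

text \<open>Part (1), core computation: on the sector \<open>d\<^sub>C(0, L w) = artanh w\<^sub>1\<close>, because the chord
  through 0 and \<open>L w\<close> has the endpoints \<open>\<plusminus>(1/w\<^sub>1) L w = L(\<plusminus>1, \<plusminus>w\<^sub>2/w\<^sub>1)\<close> on the two edges.\<close>
lemma dist_in_sector:
  assumes "\<bar>w$2\<bar> < w$1" "w$1 < 1"
  shows "hilbert_dist C 0 (L w) = artanh (w$1)"
proof -
  have w1: "0 < w$1" using assms(1) by linarith
  define c where "c = 1 / w$1"
  have c: "1 < c" using w1 assms(2) by (simp add: c_def)
  have slope: "\<bar>w$2 / w$1\<bar> \<le> 1" using assms(1) w1 by (simp add: abs_div)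
  have "c *\<^sub>R w = vector [1, w$2 / w$1]" "(-c) *\<^sub>R w = vector [-1, - (w$2 / w$1)]"
    using w1 by (simp_all add: c_def vec_eq_iff forall_2)
  then have "c *\<^sub>R L w \<in> frontier C" "(-c) *\<^sub>R L w \<in> frontier C"
    using pq_coords_edges[OF slope] edge opposite_edge
    by (auto simp flip: linear_cmul[OF linear_pq_coords])
  moreover have "L w \<noteq> 0"
  proof
    assume "L w = 0"
    then have "w = 0" using injD[OF inj_L] linear_0[OF linear_pq_coords] by metis
    then show False using w1 by simp
  qed
  ultimately have "hilbert_dist C 0 (L w) = artanh (1 / c)"
    using hilbert_dist_symmetric_chord[OF open_C convex_C zero_in_C c] by blast
  then show ?thesis by (simp add: c_def)
qed

lemma parallelogram_antipodal_edges: "antipodal_edges parallelogram P Q"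
proof
  show "bounded parallelogram"
    by (rule bounded_subset[OF bounded_convex_hull interior_subset]) (simp add: finite_imp_bounded)
  have "0 \<in> box (-1) (1::real^2)" by (simp add: mem_box_cart)
  then have "L 0 \<in> parallelogram" unfolding pq_coords_open_square[OF inj_L] by (rule imageI)
  then show "0 \<in> parallelogram" by (simp add: linear_0[OF linear_pq_coords])
  show "closed_segment P Q \<subseteq> frontier parallelogram" "closed_segment (-P) (-Q) \<subseteq> frontier parallelogram"
    using edges_in_pq_coords pq_coords_square_frontier[OF inj_L] by blast+
qed (simp_all add: convex_interior P_neq_Q)

lemma ball_sector_eq:
  "hilbert_ball C 0 R \<inter> open_triangle P 0 Q = hilbert_ball parallelogram 0 R \<inter> open_triangle P 0 Q"
proof -
  have "hilbert_dist C 0 p = hilbert_dist parallelogram 0 p" if p: "p \<in> open_triangle P 0 Q" for p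
  proof -
    obtain w where "\<bar>w$2\<bar> < w$1" "w$1 < 1" "p = L w"
      using open_triangle_in_sector[OF inj_L] p by blast
    then show ?thesis
      using dist_in_sector antipodal_edges.dist_in_sector[OF parallelogram_antipodal_edges] by simp
  qed
  then show ?thesis
    using open_triangle_subset_parallelogram parallelogram_subset
    unfolding hilbert_ball_def by auto
qed


lemma det_L_pos: "0 < \<bar>det (matrix L)\<bar>"
  using det_nz_iff_inj[OF linear_pq_coords] inj_L by simp

text \<open>Part (2), density estimate: \<open>L w \<plusminus> L z \<in> C\<close> whenever \<open>w \<plusminus> z\<close> is in the open square,
  so the Finsler unit ball at \<open>L w\<close> contains the image of a box around 0.\<close>
lemma finsler_ball_contains_box:
  assumes "\<bar>w$2\<bar> < w$1" "w$1 < 1"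
  shows "L ` box (- vector [1 - w$1, 1 - \<bar>w$2\<bar>]) (vector [1 - w$1, 1 - \<bar>w$2\<bar>])
           \<subseteq> finsler_ball C (L w)"
proof
  fix v assume "v \<in> L ` box (- vector [1 - w$1, 1 - \<bar>w$2\<bar>]) (vector [1 - w$1, 1 - \<bar>w$2\<bar>])"
  then obtain z where "z \<in> box (- vector [1 - w$1, 1 - \<bar>w$2\<bar>]) (vector [1 - w$1, 1 - \<bar>w$2\<bar>])"
    and v: "v = L z" by blast
  then have z: "\<bar>z$1\<bar> < 1 - w$1" "\<bar>z$2\<bar> < 1 - \<bar>w$2\<bar>"
    by (auto simp: mem_box_cart forall_2)
  have "w \<in> box (-1) 1" "w + z \<in> box (-1) 1" "w - z \<in> box (-1) 1"
    using z assms by (auto simp: mem_box_cart forall_2)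
  then have "L w \<in> C" "L (w + z) \<in> C" "L (w - z) \<in> C" using open_square_in_C by blast+
  then have "L w \<in> C" "L w + v \<in> C" "L w - v \<in> C"
    by (simp_all add: v linear_add[OF linear_pq_coords] linear_diff[OF linear_pq_coords])
  then show "v \<in> finsler_ball C (L w)"
    unfolding finsler_ball_def using hilbert_finsler_less_1[OF open_C bounded_C convex_C] by blast
qed

lemma density_bound:
  assumes "\<bar>w$2\<bar> < w$1" "w$1 < 1"
  shows "Defs.unit_ball_vol TYPE(real^2) / measure lebesgue (finsler_ball C (L w))
           \<le> pi / (4 * \<bar>det (matrix L)\<bar>) * (1 / ((1 - w$1) * (1 - \<bar>w$2\<bar>)))"
proof -
  let ?B = "box (- vector [1 - w$1, 1 - \<bar>w$2\<bar>]) (vector [1 - w$1, 1 - \<bar>w$2\<bar>]) :: (real^2) set"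
  have sides: "0 < 1 - w$1" "0 < 1 - \<bar>w$2\<bar>" using assms by auto
  have box_area: "measure lebesgue (L ` ?B) = \<bar>det (matrix L)\<bar> * (4 * (1 - w$1) * (1 - \<bar>w$2\<bar>))"
    using measure_linear_image[OF linear_pq_coords lmeasurable_box] measure_centered_box[OF sides]
    by simp
  have pos: "0 < \<bar>det (matrix L)\<bar> * (4 * (1 - w$1) * (1 - \<bar>w$2\<bar>))"
    using det_L_pos sides by simp
  have "Defs.unit_ball_vol TYPE(real^2) / measure lebesgue (finsler_ball C (L w))
      \<le> pi / (\<bar>det (matrix L)\<bar> * (4 * (1 - w$1) * (1 - \<bar>w$2\<bar>)))"
  proof (cases "finsler_ball C (L w) \<in> fmeasurable lebesgue")
    case True
    have "measure lebesgue (L ` ?B) \<le> measure lebesgue (finsler_ball C (L w))"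
      using measurable_linear_image[OF linear_pq_coords lmeasurable_box]
      by (intro measure_mono_fmeasurable[OF finsler_ball_contains_box[OF assms] _ True]) auto
    then show ?thesis unfolding unit_disc_area box_area using pos by (intro divide_left_mono) auto
  next
    case False
    have "measure lebesgue (finsler_ball C (L w)) = 0"
    proof (cases "finsler_ball C (L w) \<in> sets lebesgue")
      case True
      with False have "\<not> emeasure lebesgue (finsler_ball C (L w)) < \<infinity>"
        unfolding fmeasurable_def by blast
      then have "emeasure lebesgue (finsler_ball C (L w)) = \<infinity>"
        using less_top by (metis infinity_ennreal_def)
      then show ?thesis by (simp add: measure_def)
    qed (rule measure_notin_sets)
    then show ?thesis using pos by simp
  qed
  then show ?thesis by (simp add: field_simps)
qed

lemma ball_in_sector:
  assumes "p \<in> hilbert_ball C 0 R \<inter> open_triangle P 0 Q"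
  obtains w where "p = L w" "\<bar>w$2\<bar> < w$1" "w$1 < tanh R"
proof -
  obtain w where w: "\<bar>w$2\<bar> < w$1" "w$1 < 1" "p = L w"
    using open_triangle_in_sector[OF inj_L] assms by blast
  then have "artanh (w$1) < R"
    using assms dist_in_sector unfolding hilbert_ball_def by auto
  then have "w$1 < tanh R"
    using w(1,2) by (intro artanh_less_imp_less_tanh) auto
  then show thesis using that w by blast
qed

text \<open>Part (2) of the theorem: bound the density by a multiple of the sector weight pulled back
  by \<open>L\<close>, integrate by change of variables, and estimate \<open>(\<pi>/2) ln\<^sup>2(1 - tanh R) \<le> 2\<pi>R\<^sup>2\<close>.\<close>
lemma ball_measure_bound:
  assumes "0 < R"
  shows "hilbert_measure C (hilbert_ball C 0 R \<inter> open_triangle P 0 Q) \<le> ennreal (2 * pi * R\<^sup>2)"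
proof -
  define A where "A = hilbert_ball C 0 R \<inter> open_triangle P 0 Q"
  define r where "r = tanh R"
  define k where "k = pi / (4 * \<bar>det (matrix L)\<bar>)"
  define H where "H p = k * sector_weight r (inv L p)" for p
  have r: "0 \<le> r" "r < 1" using assms tanh_real_lt_1 by (simp_all add: r_def)
  have k: "0 \<le> k" using det_L_pos by (simp add: k_def)
  have H_nonneg: "0 \<le> H p" for p
    using k r by (simp add: H_def sector_weight_def half_weight_nonneg)
  have H_L: "H (L w) = k * sector_weight r w" for w by (simp add: H_def inv_f_f[OF inj_L])
  have pointwise: "indicator A p *
      ennreal (Defs.unit_ball_vol TYPE(real^2) / measure lebesgue (finsler_ball C p)) \<le> ennreal (H p)"
    for p
  proof (cases "p \<in> A")
    case True
    then obtain w where w: "p = L w" "\<bar>w$2\<bar> < w$1" "w$1 < r"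
      using ball_in_sector unfolding A_def r_def by blast
    have "Defs.unit_ball_vol TYPE(real^2) / measure lebesgue (finsler_ball C p)
        \<le> k * (1 / ((1 - w$1) * (1 - \<bar>w$2\<bar>)))"
      using density_bound[of w] w r by (simp add: k_def)
    also have "\<dots> \<le> k * sector_weight r w"
      using sector_weight_lower_bound[of w r] w r k by (intro mult_left_mono) auto
    finally show ?thesis using True by (simp add: w(1) H_L ennreal_leI)
  qed (simp add: H_nonneg)
  have "hilbert_measure C A \<le> (\<integral>\<^sup>+p. ennreal (H p) \<partial>lebesgue)"
    unfolding hilbert_measure_def by (rule nn_integral_mono) (rule pointwise)
  also have "\<dots> = ennreal (\<bar>det (matrix L)\<bar> * (k * (2 * (ln (1 - r))\<^sup>2)))"
    using H_L has_integral_mult_right[OF sector_weight_has_integral[OF r], of k]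
    by (intro nn_integral_linear_change linear_pq_coords H_nonneg
        linear_injective_imp_surjective inj_L) simp_all
  also have "\<bar>det (matrix L)\<bar> * (k * (2 * (ln (1 - r))\<^sup>2)) = pi / 2 * (- ln (1 - r))\<^sup>2"
    using det_L_pos by (simp add: k_def)
  also have "\<dots> \<le> pi / 2 * (2 * R)\<^sup>2"
    using neg_ln_one_minus_tanh[of R] assms unfolding r_def by (intro mult_left_mono power_mono) auto
  also have "\<dots> = 2 * pi * R\<^sup>2" by (simp add: power2_eq_square)
  finally show ?thesis unfolding A_def by (simp add: ennreal_leI)
qed

end

theorem lemma2p5:
  fixes C :: "(real^2) set" and P Q :: "real^2" and R :: real
  assumes "open C" and "bounded C" and "convex C" and "C \<noteq> {}" and "0 \<in> C"
    and "P \<noteq> Q"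
    and "closed_segment P Q \<subseteq> frontier C"
    and "closed_segment (-P) (-Q) \<subseteq> frontier C"
    and "R > 0"
  shows "hilbert_ball C 0 R \<inter> open_triangle P 0 Q
           = hilbert_ball (interior (convex hull {P, Q, -P, -Q})) 0 R \<inter> open_triangle P 0 Q
         \<and> hilbert_measure C (hilbert_ball C 0 R \<inter> open_triangle P 0 Q) \<le> ennreal (2 * pi * R\<^sup>2)"
proof -
  interpret antipodal_edges C P Q
    using assms by unfold_locales auto
  show ?thesis using ball_sector_eq ball_measure_bound[OF \<open>R > 0\<close>] by simp
qed

end
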